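(* Let $d\ge1$ and let $a(t)=\sum_{n\ge0}a_nt^n=\frac{h_0(a)+\cdots+h_\lambda(a)t^\lambda}{(1-t)^d}$ be a rational formal power series with integer coefficients, $h_\lambda(a)\ne0$. If $h_i(a)\ge0$ for $0\le i\le\lambda$, then for every $0\le i\le\lfloor d/2\rfloor$, $g_i(a)\le g_i(a^{\langle d\rangle})\le g_i(a^{\langle d+1\rangle})\le g_i(a^{\langle d+2\rangle})\le\cdots$.
   Context: One sets $h_i(a)=0$ for $i>\lambda$. For an integer $r\ge1$, the $r$-th Veronese series is $a^{\langle r\rangle}(t)=\sum_{n\ge0}a_{nr}t^n$; it can again be written as $\frac{h_0(a^{\langle r\rangle})+\cdots+h_{\lambda'}(a^{\langle r\rangle})t^{\lambda'}}{(1-t)^d}$ with the same $d$ and polynomial numerator, with $h_i(a^{\langle r\rangle})=0$ beyond its degree. For any such series $b(t)$ the $g$-vector entries are $g_0(b)=h_0(b)$ and $g_i(b)=h_i(b)-h_{i-1}(b)$ for $i\ge1$. *)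

theory Defs
  imports "HOL-Computational_Algebra.Computational_Algebra"
begin

definition veronese :: "nat \<Rightarrow> int fps \<Rightarrow> int fps" where
  "veronese r b = Abs_fps (\<lambda>n. b $ (n * r))"

text \<open>h-vector of a series b(t) = (h_0 + ... )/(1-t)^d: the numerator is (1-t)^d b(t),
  so h_i(b) is its i-th coefficient (automatically 0 beyond the degree).\<close>
definition hvec :: "nat \<Rightarrow> int fps \<Rightarrow> nat \<Rightarrow> int" where
  "hvec d b i = (b * (1 - fps_X) ^ d) $ i"

definition gvec :: "nat \<Rightarrow> int fps \<Rightarrow> nat \<Rightarrow> int" where
  "gvec d b i = (if i = 0 then hvec d b 0 else hvec d b i - hvec d b (i - 1))"

end

theory Submission
  imports Defs
begin

(*
  Write a(t)(1-t)^d = h(t) and G_r(t) = 1 + t + ... + t^(r-1), so that 1 - t^r = (1-t) G_r(t).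
  Taking the r-th Veronese section commutes with multiplication by (1 - t^r)^d, hence
    h_i(a^<r>) = [t^(ir)] h(t) G_r(t)^d = sum_j h_j B_{r,d}(ir - j),
  where B_{r,d}(x), the coefficient of t^x in G_r^d, counts the ways to write x as a sum
  of d integers in [0,r).  Thus g_i(a^<r>) = sum_j h_j (B_{r,d}(ir - j) - B_{r,d}((i-1)r - j)),
  and since h_j >= 0 everything reduces to inequalities between these "jumps" of box
  coefficients.  The file first develops the box coefficients as iterated window sums of
  integer sequences, together with their symmetry and (strict) unimodality.  The key
  comparison of jumps for r and r+1 is proved by passing from G_r^d to G_(r+1)^d one factor
  at a time.  Finally the Veronese formula for h-vectors is established and the theorem
  follows by summing the termwise inequalities.
*)

section \<open>Window sums and box coefficients\<close>

definition conv :: "nat \<Rightarrow> (int \<Rightarrow> int) \<Rightarrow> int \<Rightarrow> int" where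
  "conv s f x = (\<Sum>v<s. f (x - int v))"

definition delta :: "int \<Rightarrow> int" where
  "delta x = (if x = 0 then 1 else 0)"

text \<open>box r d x is the coefficient of t^x in (1 + t + ... + t^(r-1))^d.\<close>
definition box :: "nat \<Rightarrow> nat \<Rightarrow> int \<Rightarrow> int" where
  "box r d = (conv r ^^ d) delta"

lemma conv_Suc_right: "conv (Suc s) f x = conv s f x + f (x - int s)"
  by (simp add: conv_def)

lemma conv_Suc_left: "conv (Suc s) f x = f x + conv s f (x - 1)"
  unfolding conv_def by (simp only: sum.lessThan_Suc_shift) (simp add: algebra_simps)

lemma conv_commute: "conv s (conv t f) = conv t (conv s f)"
proof
  fix x
  have "conv s (conv t f) x = (\<Sum>v<s. \<Sum>w<t. f (x - int v - int w))"
    by (simp add: conv_def)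
  also have "\<dots> = (\<Sum>w<t. \<Sum>v<s. f (x - int v - int w))"
    by (rule sum.swap)
  finally show "conv s (conv t f) x = conv t (conv s f) x"
    by (simp add: conv_def algebra_simps)
qed

lemma funpow_conv_commute: "(conv s ^^ n) (conv t f) = conv t ((conv s ^^ n) f)"
  by (induction n) (simp_all add: conv_commute)

lemma box_neg: "x < 0 \<Longrightarrow> box r d x = 0"
  by (induction d arbitrary: x) (simp_all add: box_def conv_def delta_def)

text \<open>Lengthening a window by one adds a single term of f on each side of a difference of
  window sums; three shift patterns of this, used in the interpolation argument below.\<close>
lemma conv_Suc_difference:
  shows "f (y - int s) \<le> f (x - int s) \<Longrightarrow>
           conv s f x - conv s f y \<le> conv (Suc s) f x - conv (Suc s) f y"
    and "f (y - int s) \<le> f (x + 1) \<Longrightarrow>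
           conv s f x - conv s f y \<le> conv (Suc s) f (x + 1) - conv (Suc s) f y"
    and "f (y + 1) \<le> f (x + 1) \<Longrightarrow>
           conv s f x - conv s f y \<le> conv (Suc s) f (x + 1) - conv (Suc s) f (y + 1)"
  using conv_Suc_right[of s f x] conv_Suc_right[of s f y]
    conv_Suc_left[of s f "x + 1"] conv_Suc_left[of s f "y + 1"] by simp_all

section \<open>Symmetric unimodal sequences\<close>

lemma int_chain_le:
  fixes f :: "int \<Rightarrow> 'a::order"
  assumes "a \<le> b" and "\<And>z. a \<le> z \<Longrightarrow> z < b \<Longrightarrow> f z \<le> f (z + 1)"
  shows "f a \<le> f b"
proof -
  have "c \<le> b \<Longrightarrow> f a \<le> f c" if "a \<le> c" for c
    using that
  proof (induction c rule: int_ge_induct)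
    case (step c)
    then show ?case using assms(2)[of c] by (auto intro: order_trans)
  qed simp
  then show ?thesis using assms(1) by simp
qed

lemma int_chain_less:
  fixes f :: "int \<Rightarrow> 'a::order"
  assumes "a < b" and step: "\<And>z. a \<le> z \<Longrightarrow> z < b \<Longrightarrow> f z < f (z + 1)"
  shows "f a < f b"
proof -
  have "f a < f (a + 1)" using step assms(1) by simp
  also have "f (a + 1) \<le> f b"
    using int_chain_le[of "a + 1" b f] step assms(1) by (simp add: less_imp_le)
  finally show ?thesis .
qed

definition symunimodal :: "(int \<Rightarrow> int) \<Rightarrow> int \<Rightarrow> bool" where
  "symunimodal f N \<longleftrightarrow> (\<forall>x<0. f x = 0) \<and> (\<forall>x. f x = f (N - x)) \<and>
     (\<forall>z. 2 * z + 1 \<le> N \<longrightarrow> f z \<le> f (z + 1))"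

lemma symunimodal_le:
  assumes "symunimodal f N" "y \<le> x" "x + y \<le> N"
  shows "f y \<le> f x"
proof -
  have inc: "\<And>z. 2 * z + 1 \<le> N \<Longrightarrow> f z \<le> f (z + 1)"
    and sym: "\<And>x. f x = f (N - x)"
    using assms(1) unfolding symunimodal_def by auto
  have left: "f y \<le> f x'" if "y \<le> x'" "2 * x' \<le> N + 1" for x'
    using int_chain_le[of y x' f] that inc by auto
  show ?thesis
  proof (cases "2 * x \<le> N + 1")
    case True then show ?thesis using left assms by auto
  next
    case False then show ?thesis using left[of "N - x"] sym[of x] assms by auto
  qed
qed

lemma symunimodal_conv:
  assumes "symunimodal f N" "1 \<le> s"
  shows "symunimodal (conv s f) (N + int s - 1)"
proof -
  obtain s' where s: "s = Suc s'" using assms(2) by (cases s) auto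
  have neg: "\<And>x. x < 0 \<Longrightarrow> f x = 0" and sym: "\<And>x. f x = f (N - x)"
    using assms(1) unfolding symunimodal_def by auto
  have "conv s f (N + int s - 1 - x) = conv s f x" for x
  proof -
    have "conv s f (N + int s - 1 - x) = (\<Sum>v<s. f (x - int (s - Suc v)))"
      unfolding conv_def
    proof (rule sum.cong)
      fix v assume "v \<in> {..<s}"
      then have "x - int (s - Suc v) = N - (N + int s - 1 - x - int v)"
        by (simp add: of_nat_diff)
      then show "f (N + int s - 1 - x - int v) = f (x - int (s - Suc v))"
        using sym by metis
    qed simp
    also have "\<dots> = conv s f x"
      unfolding conv_def by (rule sum.nat_diff_reindex)
    finally show ?thesis .
  qed
  moreover have "conv s f z \<le> conv s f (z + 1)" if "2 * z + 1 \<le> N + int s - 1" for z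
  proof -
    have "f (z - int s') \<le> f (z + 1)"
      using symunimodal_le[OF assms(1)] that s by auto
    then show ?thesis
      using conv_Suc_right[of s' f z] conv_Suc_left[of s' f "z + 1"] s by simp
  qed
  ultimately show ?thesis
    unfolding symunimodal_def by (auto simp: conv_def neg)
qed

lemma symunimodal_funpow_conv:
  assumes "symunimodal f N" "1 \<le> s"
  shows "symunimodal ((conv s ^^ n) f) (N + int n * (int s - 1))"
proof (induction n)
  case (Suc n)
  show ?case
    using symunimodal_conv[OF Suc assms(2)] by (simp add: algebra_simps)
qed (use assms in simp)

lemma symunimodal_delta: "symunimodal delta 0"
  unfolding symunimodal_def delta_def by auto

lemma symunimodal_box: "1 \<le> r \<Longrightarrow> symunimodal (box r d) (int d * (int r - 1))"
  using symunimodal_funpow_conv[OF symunimodal_delta, of r d] by (simp add: box_def)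

lemma box_symmetric: "1 \<le> r \<Longrightarrow> box r d x = box r d (int d * (int r - 1) - x)"
  using symunimodal_box unfolding symunimodal_def by blast

definition strict_symunimodal :: "(int \<Rightarrow> int) \<Rightarrow> int \<Rightarrow> bool" where
  "strict_symunimodal f N \<longleftrightarrow> symunimodal f N \<and>
     (\<forall>z. -1 \<le> z \<longrightarrow> 2 * z + 2 \<le> N \<longrightarrow> f z < f (z + 1))"

lemma strict_symunimodal_less:
  assumes "strict_symunimodal f N" "y < x" "0 \<le> x" "x \<le> N" "x + y \<le> N - 1"
  shows "f y < f x"
proof -
  have inc: "\<And>z. -1 \<le> z \<Longrightarrow> 2 * z + 2 \<le> N \<Longrightarrow> f z < f (z + 1)"
    and neg: "\<And>x. x < 0 \<Longrightarrow> f x = 0" and sym: "\<And>x. f x = f (N - x)"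
    using assms(1) unfolding strict_symunimodal_def symunimodal_def by auto
  have left: "f y < f x'" if "y < x'" "0 \<le> x'" "2 * x' \<le> N" for x'
  proof -
    define y' where "y' = max y (-1)"
    have "f y \<le> f y'"
      using neg[of y] neg[of "-1"] by (cases "y < -1") (simp_all add: y'_def)
    also have "f y' < f x'"
      using int_chain_less[of y' x' f] that inc unfolding y'_def by auto
    finally show ?thesis .
  qed
  show ?thesis
  proof (cases "2 * x \<le> N")
    case True then show ?thesis using left assms by auto
  next
    case False then show ?thesis using left[of "N - x"] sym[of x] assms by auto
  qed
qed

lemma strict_symunimodal_conv:
  assumes "strict_symunimodal f N" "1 \<le> s" "int s \<le> N + 1"
  shows "strict_symunimodal (conv s f) (N + int s - 1)"
proof -
  obtain s' where s: "s = Suc s'" using assms(2) by (cases s) auto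
  have "conv s f z < conv s f (z + 1)" if "-1 \<le> z" "2 * z + 2 \<le> N + int s - 1" for z
  proof -
    have "f (z - int s') < f (z + 1)"
      using strict_symunimodal_less[OF assms(1)] that s assms(3) by auto
    then show ?thesis
      using conv_Suc_right[of s' f z] conv_Suc_left[of s' f "z + 1"] s by simp
  qed
  moreover have "symunimodal (conv s f) (N + int s - 1)"
    using symunimodal_conv assms(1,2) unfolding strict_symunimodal_def by blast
  ultimately show ?thesis unfolding strict_symunimodal_def by blast
qed

text \<open>Iterated version; the admissible window length only grows along the way.\<close>
lemma strict_symunimodal_funpow_conv:
  assumes "strict_symunimodal f N" "1 \<le> s" "int s \<le> N + 1"
  shows "strict_symunimodal ((conv s ^^ n) f) (N + int n * (int s - 1))"
proof (induction n)
  case (Suc n)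
  have "int s \<le> N + int n * (int s - 1) + 1" using assms(2,3) by (simp add: order_trans)
  then show ?case
    using strict_symunimodal_conv[OF Suc assms(2)] by (simp add: algebra_simps)
qed (use assms in simp)

lemma conv_delta: "conv r delta x = (if 0 \<le> x \<and> x < int r then 1 else 0)"
  by (induction r) (auto simp: conv_def delta_def)

lemma strict_symunimodal_tent:
  assumes "1 \<le> r"
  shows "strict_symunimodal (conv r (conv r delta)) (2 * int r - 2)"
proof -
  obtain r' where r: "r = Suc r'" using assms by (cases r) auto
  have "conv r (conv r delta) z < conv r (conv r delta) (z + 1)"
    if "-1 \<le> z" "2 * z + 2 \<le> 2 * int r - 2" for z
    using conv_Suc_right[of r' _ z] conv_Suc_left[of r' _ "z + 1"] that r
    by (simp add: conv_delta)
  moreover have "symunimodal (conv r (conv r delta)) (2 * int r - 2)"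
    using symunimodal_conv[OF symunimodal_conv[OF symunimodal_delta assms] assms]
    by (simp add: algebra_simps)
  ultimately show ?thesis unfolding strict_symunimodal_def by blast
qed

text \<open>For d \<ge> 2 factors, B_{r,d} is strictly unimodal: start from the tent and add windows.\<close>
lemma strict_symunimodal_box:
  assumes "1 \<le> r" "2 \<le> d"
  shows "strict_symunimodal (box r d) (int d * (int r - 1))"
proof -
  have "d = (d - 2) + 2" using assms by simp
  then have "box r d = (conv r ^^ (d - 2)) ((conv r ^^ 2) delta)"
    unfolding box_def by (metis comp_apply funpow_add)
  moreover have "(conv r ^^ 2) delta = conv r (conv r delta)"
    by (simp add: numeral_2_eq_2)
  moreover have "2 * int r - 2 + int (d - 2) * (int r - 1) = int d * (int r - 1)"
    using assms by (simp add: of_nat_diff algebra_simps)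
  ultimately show ?thesis
    using strict_symunimodal_funpow_conv[OF strict_symunimodal_tent[OF assms(1)] assms(1),
        of "d - 2"] assms by simp
qed

section \<open>Comparing box coefficients for r and r+1\<close>

text \<open>mixed_box r k l x is the coefficient of t^x in G_(r+1)^k G_r^l; it interpolates
  between box r d (k = 0) and box (r+1) d (l = 0).\<close>
definition mixed_box :: "nat \<Rightarrow> nat \<Rightarrow> nat \<Rightarrow> int \<Rightarrow> int" where
  "mixed_box r k l = (conv (Suc r) ^^ k) ((conv r ^^ l) delta)"

lemma mixed_box_Suc_left: "mixed_box r (Suc k) l = conv (Suc r) (mixed_box r k l)"
  by (simp add: mixed_box_def)

lemma mixed_box_Suc_right: "mixed_box r k (Suc l) = conv r (mixed_box r k l)"
  by (simp add: mixed_box_def funpow_conv_commute)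

lemma symunimodal_mixed_box:
  assumes "1 \<le> r"
  shows "symunimodal (mixed_box r k l) (int l * (int r - 1) + int k * int r)"
  using symunimodal_funpow_conv[OF symunimodal_funpow_conv[OF symunimodal_delta assms],
      of "Suc r" k l]
  by (simp add: mixed_box_def)

text \<open>The key inequality: a difference of box coefficients for r grows when passing to r+1
  with the two arguments shifted by i and i-1.  One factor G_r is replaced by G_(r+1) at a
  time; during the first d-i replacements the arguments stay put, at replacement d-i the
  larger argument moves by one, and afterwards both move by one per replacement.  Each step
  is a single comparison inside a symmetric unimodal sequence.\<close>
lemma box_difference_Suc:
  assumes "1 \<le> i" "i \<le> d" "1 \<le> r" "int d \<le> 2 * int r" "\<beta> \<le> \<alpha>"
    and "\<alpha> + \<beta> + 2 * int i \<le> (int d - 1) * int r + 1"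
  shows "box r d \<alpha> - box r d \<beta> \<le> box (Suc r) d (\<alpha> + int i) - box (Suc r) d (\<beta> + int i - 1)"
proof -
  define F where "F k = mixed_box r k (d - k)" for k
  define Q where "Q k = mixed_box r k (d - Suc k)" for k
  have step: "F (Suc k) = conv (Suc r) (Q k)" "F k = conv r (Q k)" if "k < d" for k
    using that mixed_box_Suc_left mixed_box_Suc_right[of r k "d - Suc k"]
    by (simp_all add: F_def Q_def Suc_diff_Suc)
  have Q_le: "Q k y \<le> Q k x" if "k < d" "y \<le> x" "x + y \<le> (int d - 1) * int r - int d + 1 + int k"
    for k x y
  proof -
    have "symunimodal (Q k) (int (d - Suc k) * (int r - 1) + int k * int r)"
      unfolding Q_def by (rule symunimodal_mixed_box[OF assms(3)])
    then show ?thesis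
      by (rule symunimodal_le) (use that in \<open>simp_all add: of_nat_diff algebra_simps\<close>)
  qed
  have invariant: "box r d \<alpha> - box r d \<beta> \<le>
      F k (\<alpha> + int (k - (d - i))) - F k (\<beta> + int (k - Suc (d - i)))" if "k \<le> d" for k
    using that
  proof (induction k)
    case 0 then show ?case by (simp add: F_def mixed_box_def box_def)
  next
    case (Suc k)
    then have k: "k < d" and IH: "box r d \<alpha> - box r d \<beta> \<le>
        F k (\<alpha> + int (k - (d - i))) - F k (\<beta> + int (k - Suc (d - i)))" by simp_all
    consider "k < d - i" | "k = d - i" | "d - i < k" by linarith
    then show ?case
    proof cases
      case 1
      have "Q k (\<beta> - int r) \<le> Q k (\<alpha> - int r)"
        using Q_le[OF k] assms 1 by simp
      then show ?thesis
        using IH conv_Suc_difference(1)[of "Q k" \<beta> r \<alpha>] 1 by (simp add: step[OF k])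
    next
      case 2
      have "Q k (\<beta> - int r) \<le> Q k (\<alpha> + 1)"
        using Q_le[OF k] assms 2 by (simp add: of_nat_diff)
      moreover have "k - (d - i) = 0" "Suc k - (d - i) = 1" "k - Suc (d - i) = 0"
        "Suc k - Suc (d - i) = 0" using 2 by simp_all
      ultimately show ?thesis
        using IH conv_Suc_difference(2)[of "Q k" \<beta> r \<alpha>] by (simp add: step[OF k])
    next
      case 3
      define u where "u = int k - int d + int i"
      have shifts: "int (k - (d - i)) = u" "int (Suc k - (d - i)) = u + 1"
         "int (k - Suc (d - i)) = u - 1" "int (Suc k - Suc (d - i)) = u"
        using 3 assms unfolding u_def by (auto simp: of_nat_diff)
      have "Q k (\<beta> + (u - 1) + 1) \<le> Q k (\<alpha> + u + 1)"
        using Q_le[OF k] assms k unfolding u_def by simp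
      then show ?thesis
        using IH conv_Suc_difference(3)[of "Q k" "\<beta> + (u - 1)" "\<alpha> + u" r]
        by (simp add: step[OF k] shifts algebra_simps)
    qed
  qed
  have "int (d - (d - i)) = int i" "int (d - Suc (d - i)) = int i - 1"
    using assms by auto
  then show ?thesis
    using invariant[of d] by (simp add: F_def mixed_box_def box_def algebra_simps)
qed

text \<open>The jump of box coefficients entering g_i of the r-th Veronese series, for the term h_j.\<close>
definition box_jump :: "nat \<Rightarrow> nat \<Rightarrow> nat \<Rightarrow> nat \<Rightarrow> int" where
  "box_jump r d i j = box r d (int i * int r - int j) - box r d ((int i - 1) * int r - int j)"

text \<open>Jumps grow with r once r \<ge> d.  When 2i = d the larger argument is first reflected
  through the centre of symmetry so that the bound of the key inequality holds.\<close>
lemma box_jump_mono: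
  assumes "d \<le> r" "1 \<le> i" "2 * i \<le> d"
  shows "box_jump r d i j \<le> box_jump (Suc r) d i j"
proof -
  define m where "m = int i * int r - int j"
  have r: "1 \<le> r" "int d \<le> 2 * int r" using assms by auto
  have jump_Suc: "box_jump (Suc r) d i j =
      box (Suc r) d (m + int i) - box (Suc r) d (m - int r + int i - 1)"
    unfolding box_jump_def m_def by (simp add: algebra_simps)
  have jump: "box_jump r d i j = box r d m - box r d (m - int r)"
    unfolding box_jump_def m_def by (simp add: algebra_simps)
  show ?thesis
  proof (cases "2 * i < d")
    case True
    have "(2 * int i + 1) * int r \<le> int d * int r"
      using True by (intro mult_right_mono) auto
    then have "m + (m - int r) + 2 * int i \<le> (int d - 1) * int r + 1"
      unfolding m_def using assms by (simp add: algebra_simps)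
    then show ?thesis
      using box_difference_Suc[of i d r "m - int r" m] assms r by (simp add: jump jump_Suc)
  next
    case False
    then have d: "int d = 2 * int i" using assms by simp
    define \<alpha> where "\<alpha> = int d * (int r - 1) - m"
    have "box r d m = box r d \<alpha>"
      unfolding \<alpha>_def by (rule box_symmetric[OF r(1)])
    moreover have "box (Suc r) d (m + int i) = box (Suc r) d (\<alpha> + int i)"
      using box_symmetric[of "Suc r" d "m + int i"] unfolding \<alpha>_def d
      by (simp add: algebra_simps)
    moreover have "box r d \<alpha> - box r d (m - int r) \<le>
        box (Suc r) d (\<alpha> + int i) - box (Suc r) d (m - int r + int i - 1)"
      using box_difference_Suc[of i d r "m - int r" \<alpha>] assms r
      unfolding \<alpha>_def m_def d by (simp add: algebra_simps)
    ultimately show ?thesis by (simp add: jump jump_Suc)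
  qed
qed

lemma box_jump_base:
  assumes "1 \<le> i" "2 * i \<le> d"
  shows "0 \<le> box_jump d d i j" and "1 \<le> box_jump d d i i"
proof -
  have d: "1 \<le> d" "2 \<le> d" using assms by auto
  have m: "2 * int i * int d \<le> int d * int d"
    using assms by (intro mult_right_mono) auto
  have "box d d ((int i - 1) * int d - int j) \<le> box d d (int i * int d - int j)"
    by (rule symunimodal_le[OF symunimodal_box[OF d(1)]]) (use m in \<open>simp_all add: algebra_simps\<close>)
  then show "0 \<le> box_jump d d i j" by (simp add: box_jump_def)
  have "box d d ((int i - 1) * int d - int i) < box d d (int i * int d - int i)"
  proof (rule strict_symunimodal_less[OF strict_symunimodal_box[OF d]])
    have "0 \<le> (int d - int i) * (int d - 1)" using assms by (intro mult_nonneg_nonneg) auto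
    moreover have "int i \<le> int i * int d" using assms by simp
    ultimately show "0 \<le> int i * int d - int i" "int i * int d - int i \<le> int d * (int d - 1)"
      by (simp_all add: algebra_simps)
    show "(int i - 1) * int d - int i < int i * int d - int i"
      using d by (simp add: algebra_simps)
    show "int i * int d - int i + ((int i - 1) * int d - int i) \<le> int d * (int d - 1) - 1"
      using m assms(1) unfolding left_diff_distrib right_diff_distrib mult.assoc by linarith
  qed
  then show "1 \<le> box_jump d d i i" by (simp add: box_jump_def)
qed


section \<open>h- and g-vectors of Veronese series\<close>

definition fps_window :: "nat \<Rightarrow> int fps" where
  "fps_window r = (\<Sum>v<r. fps_X ^ v)"

lemma one_minus_X_times_window: "(1 - fps_X) * fps_window r = 1 - fps_X ^ r"
proof (induction r)
  case (Suc r)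
  have "(1 - fps_X) * fps_window (Suc r) = (1 - fps_X) * fps_window r + (1 - fps_X) * fps_X ^ r"
    by (simp add: fps_window_def distrib_left)
  also have "\<dots> = 1 - fps_X ^ Suc r"
    unfolding Suc.IH by (simp add: algebra_simps)
  finally show ?case .
qed (simp add: fps_window_def)

lemma fps_window_mult_nth:
  assumes "\<And>n. \<phi> (int n) = F $ n" and "\<And>x. x < 0 \<Longrightarrow> \<phi> x = 0"
  shows "(F * fps_window s) $ n = conv s \<phi> (int n)"
proof -
  have "(F * fps_X ^ v) $ n = \<phi> (int n - int v)" for v
  proof (cases "n < v")
    case False
    then have "int n - int v = int (n - v)" by simp
    then show ?thesis using False assms(1)[of "n - v"] by (simp add: fps_X_power_mult_right_nth)
  qed (simp add: fps_X_power_mult_right_nth assms(2))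
  then show ?thesis
    by (simp add: fps_window_def conv_def sum_distrib_left fps_sum_nth)
qed

lemma fps_window_power_nth: "(fps_window r ^ d) $ n = box r d (int n)"
proof (induction d arbitrary: n)
  case 0 then show ?case by (simp add: box_def delta_def)
next
  case (Suc d)
  have "(fps_window r ^ d * fps_window r) $ n = conv r (box r d) (int n)"
    by (rule fps_window_mult_nth) (simp_all add: Suc box_neg)
  then show ?case by (simp only: power_Suc2) (simp add: box_def)
qed

lemma veronese_mult_one_minus_X_power:
  assumes "1 \<le> r"
  shows "veronese r (b * (1 - fps_X ^ r)) = veronese r b * (1 - fps_X)"
proof (rule fps_ext)
  fix n
  have "r \<le> n * r \<longleftrightarrow> 1 \<le> n" "n * r - r = (n - 1) * r"
    using assms by (simp_all add: diff_mult_distrib)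
  then show "veronese r (b * (1 - fps_X ^ r)) $ n = (veronese r b * (1 - fps_X)) $ n"
    using fps_X_power_mult_right_nth[of "veronese r b" 1 n] assms
    by (simp add: veronese_def right_diff_distrib fps_X_power_mult_right_nth)
qed

lemma veronese_mult_one_minus_X_power_pow:
  assumes "1 \<le> r"
  shows "veronese r (b * (1 - fps_X ^ r) ^ d) = veronese r b * (1 - fps_X) ^ d"
proof (induction d)
  case (Suc d)
  have "veronese r (b * (1 - fps_X ^ r) ^ Suc d) = veronese r (b * (1 - fps_X ^ r) ^ d * (1 - fps_X ^ r))"
    by (simp only: power_Suc2 mult.assoc)
  also have "\<dots> = veronese r (b * (1 - fps_X ^ r) ^ d) * (1 - fps_X)"
    by (rule veronese_mult_one_minus_X_power[OF assms])
  also have "\<dots> = veronese r b * (1 - fps_X) ^ Suc d"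
    by (simp add: Suc power_Suc2 mult.assoc)
  finally show ?case .
qed simp

text \<open>h_i(a^<r>) = sum_j h_j(a) B_{r,d}(ir - j), for an arbitrary series a; the sum may be
  taken over any range j \<le> K with K \<ge> ir, since the box coefficients vanish below 0.\<close>
lemma hvec_veronese:
  assumes "1 \<le> r" "i * r \<le> K"
  shows "hvec d (veronese r a) i = (\<Sum>j\<le>K. hvec d a j * box r d (int (i * r) - int j))"
proof -
  have factor: "(1 - fps_X ^ r) ^ d = (1 - fps_X) ^ d * fps_window r ^ d"
    by (simp add: one_minus_X_times_window[symmetric] power_mult_distrib)
  have "hvec d (veronese r a) i = veronese r (a * (1 - fps_X ^ r) ^ d) $ i"
    by (simp add: hvec_def veronese_mult_one_minus_X_power_pow[OF assms(1)])
  also have "\<dots> = (a * (1 - fps_X) ^ d * fps_window r ^ d) $ (i * r)"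
    by (simp add: veronese_def factor mult.assoc)
  also have "\<dots> = (\<Sum>j\<le>i * r. hvec d a j * box r d (int (i * r) - int j))"
    by (simp add: fps_mult_nth fps_window_power_nth hvec_def atLeast0AtMost of_nat_diff)
  also have "\<dots> = (\<Sum>j\<le>K. hvec d a j * box r d (int (i * r) - int j))"
    by (rule sum.mono_neutral_left) (use assms(2) in \<open>auto intro!: box_neg simp flip: of_nat_mult\<close>)
  finally show ?thesis .
qed

lemma gvec_veronese:
  assumes "1 \<le> r" "1 \<le> i" "i * r \<le> K"
  shows "gvec d (veronese r a) i = (\<Sum>j\<le>K. hvec d a j * box_jump r d i j)"
proof -
  have "(i - 1) * r \<le> K" using assms(3) by (meson diff_le_self le_trans mult_le_mono1)
  moreover have "int ((i - 1) * r) = (int i - 1) * int r" using assms(2) by (simp add: of_nat_diff)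
  ultimately show ?thesis
    using hvec_veronese[OF assms(1,3)] hvec_veronese[OF assms(1), of "i - 1" K] assms(2)
    by (simp add: gvec_def box_jump_def sum_subtractf right_diff_distrib)
qed

lemma gvec_veronese_0: "gvec d (veronese r a) 0 = gvec d a 0"
  by (simp add: gvec_def hvec_def veronese_def)

text \<open>First inequality, for a nonnegative h-vector: g_i(a) \<le> h_i(a), which is at most the
  j = i term of the sum for g_i(a^<d>) since that jump is positive; all other terms are \<ge> 0.\<close>
lemma gvec_le_gvec_veronese:
  assumes nonneg: "\<And>j. 0 \<le> hvec d a j" and "1 \<le> i" "2 * i \<le> d"
  shows "gvec d a i \<le> gvec d (veronese d a) i"
proof -
  define T where "T j = hvec d a j * box_jump d d i j" for j
  have "gvec d a i \<le> hvec d a i"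
    using nonneg[of "i - 1"] assms(2) by (simp add: gvec_def)
  also have "\<dots> \<le> T i"
    using box_jump_base(2)[OF assms(2,3)] nonneg[of i] by (simp add: T_def mult_le_cancel_left1)
  also have "\<dots> \<le> (\<Sum>j\<le>i * d. T j)"
    by (rule member_le_sum)
      (use assms box_jump_base(1)[OF assms(2,3)] in \<open>auto simp: T_def\<close>)
  also have "\<dots> = gvec d (veronese d a) i"
    using gvec_veronese[of d i "i * d"] assms by (simp add: T_def)
  finally show ?thesis .
qed

lemma gvec_veronese_mono:
  assumes "\<And>j. 0 \<le> hvec d a j" and "1 \<le> i" "2 * i \<le> d" "d \<le> r"
  shows "gvec d (veronese r a) i \<le> gvec d (veronese (Suc r) a) i"
proof -
  have "gvec d (veronese r a) i = (\<Sum>j\<le>i * Suc r. hvec d a j * box_jump r d i j)"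
    using assms by (intro gvec_veronese) auto
  also have "\<dots> \<le> (\<Sum>j\<le>i * Suc r. hvec d a j * box_jump (Suc r) d i j)"
    by (intro sum_mono mult_left_mono box_jump_mono) (use assms in auto)
  also have "\<dots> = gvec d (veronese (Suc r) a) i"
    using assms by (intro gvec_veronese[symmetric]) auto
  finally show ?thesis .
qed

theorem mainTheorem11:
  fixes a :: "int fps" and h :: "int poly" and d :: nat
  assumes "d \<ge> 1"
    and "a * (1 - fps_X) ^ d = fps_of_poly h"
    and "h \<noteq> 0"
    and "\<forall>i \<le> degree h. coeff h i \<ge> 0"
  shows "\<forall>i \<le> d div 2.
           gvec d a i \<le> gvec d (veronese d a) i \<and>
           (\<forall>r \<ge> d. gvec d (veronese r a) i \<le> gvec d (veronese (Suc r) a) i)"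
proof (intro allI impI)
  fix i assume i: "i \<le> d div 2"
  have nonneg: "0 \<le> hvec d a j" for j
    using assms(4) by (cases "j \<le> degree h") (auto simp: hvec_def assms(2) coeff_eq_0)
  show "gvec d a i \<le> gvec d (veronese d a) i \<and>
      (\<forall>r \<ge> d. gvec d (veronese r a) i \<le> gvec d (veronese (Suc r) a) i)"
  proof (cases "i = 0")
    case True then show ?thesis by (simp add: gvec_veronese_0)
  next
    case False
    then have "1 \<le> i" "2 * i \<le> d" using i by auto
    then show ?thesis
      using gvec_le_gvec_veronese gvec_veronese_mono nonneg by blast
  qed
qed

end
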